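(* Let $\mathbb T=(V,E,o)$ be a locally finite rooted tree (edges directed away from the root) with rates satisfying a flow rule for a flow of strength $q>0$, and assume that particles are generated at the root at rate $\lambda=\rho q$ for some $\rho\in(0,1)$. Then the Bernoulli-$\rho$ product measure $\nu_\rho$ on $\{0,1\}^V$ is an invariant measure for the TASEP $(\eta_t)_{t\ge0}$ on $\mathbb T$, i.e. $\int\mathcal Lf\,d\nu_\rho=0$ for all cylinder functions $f$.
   Context: The TASEP on $\mathbb T$ with rates $(r_{x,y})_{(x,y)\in E}$ (positive, uniformly bounded above) and reservoir intensity $\lambda$ has generator $\mathcal Lf(\eta)=\lambda(1-\eta(o))[f(\eta^o)-f(\eta)]+\sum_{(x,y)\in E}r_{x,y}\eta(x)(1-\eta(y))[f(\eta^{x,y})-f(\eta)]$, where $\eta^{x,y}$ swaps the values at $x,y$ and $\eta^o$ flips the value at $o$. $r_x:=\sum_{y:(x,y)\in E}r_{x,y}$; $\bar x$ is the parent of $x\ne o$. Flow rule of strength $q$: $r_x-r_{\bar x,x}=0$ for all $x\ne o$ and $r_o=q$. *)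

theory Defs
  imports "HOL-Probability.Probability"
begin

definition locally_finite_rooted_tree :: "('v \<times> 'v) set \<Rightarrow> 'v \<Rightarrow> bool" where
  "locally_finite_rooted_tree E rt \<longleftrightarrow>
     (\<forall>x. (x, rt) \<notin> E) \<and>
     (\<forall>y. y \<noteq> rt \<longrightarrow> (\<exists>!x. (x, y) \<in> E)) \<and>
     (\<forall>x. (rt, x) \<in> E\<^sup>*) \<and>
     (\<forall>x. finite {y. (x, y) \<in> E})"

definition out_rate :: "('v \<times> 'v) set \<Rightarrow> ('v \<Rightarrow> 'v \<Rightarrow> real) \<Rightarrow> 'v \<Rightarrow> real" where
  "out_rate E r x = (\<Sum>y\<in>{y. (x, y) \<in> E}. r x y)"

definition flow_rule :: "('v \<times> 'v) set \<Rightarrow> 'v \<Rightarrow> ('v \<Rightarrow> 'v \<Rightarrow> real) \<Rightarrow> real \<Rightarrow> bool" where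
  "flow_rule E rt r q \<longleftrightarrow>
     (\<forall>x y. (x, y) \<in> E \<longrightarrow> out_rate E r y - r x y = 0) \<and> out_rate E r rt = q"

text \<open>Configurations: 'v \<Rightarrow> bool (True = occupied).\<close>
definition swap_conf :: "('v \<Rightarrow> bool) \<Rightarrow> 'v \<Rightarrow> 'v \<Rightarrow> ('v \<Rightarrow> bool)" where
  "swap_conf \<eta> x y = \<eta>(x := \<eta> y, y := \<eta> x)"

definition flip_conf :: "('v \<Rightarrow> bool) \<Rightarrow> 'v \<Rightarrow> ('v \<Rightarrow> bool)" where
  "flip_conf \<eta> x = \<eta>(x := \<not> \<eta> x)"

definition cylinder_fun :: "(('v \<Rightarrow> bool) \<Rightarrow> real) \<Rightarrow> bool" where
  "cylinder_fun f \<longleftrightarrow> (\<exists>S. finite S \<and>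
      (\<forall>\<eta> \<zeta>. (\<forall>x\<in>S. \<eta> x = \<zeta> x) \<longrightarrow> f \<eta> = f \<zeta>))"

text \<open>Generator of the TASEP with reservoir intensity lam at the root.
The edge sum is an (unconditional) infinite sum over E; for cylinder f only
finitely many terms are nonzero.\<close>
definition tasep_gen ::
  "('v \<times> 'v) set \<Rightarrow> 'v \<Rightarrow> ('v \<Rightarrow> 'v \<Rightarrow> real) \<Rightarrow> real \<Rightarrow>
   (('v \<Rightarrow> bool) \<Rightarrow> real) \<Rightarrow> ('v \<Rightarrow> bool) \<Rightarrow> real" where
  "tasep_gen E rt r lam f \<eta> =
     lam * (1 - of_bool (\<eta> rt)) * (f (flip_conf \<eta> rt) - f \<eta>) +
     (\<Sum>\<^sub>\<infinity>(x, y)\<in>E. r x y * of_bool (\<eta> x) * (1 - of_bool (\<eta> y)) *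
                      (f (swap_conf \<eta> x y) - f \<eta>))"

definition bernoulli_product :: "real \<Rightarrow> ('v \<Rightarrow> bool) measure" where
  "bernoulli_product \<rho> = (\<Pi>\<^sub>M x\<in>UNIV. measure_pmf (bernoulli_pmf \<rho>))"

end

theory Submission
  imports Defs
begin

text \<open>Let \<open>G v\<close> be the change of \<open>\<integral>f d\<nu>\<^sub>\<rho>\<close> when site \<open>v\<close> is forced to be occupied.
Conditioning on the occupation of the root, the reservoir term integrates to \<open>\<lambda> G o\<close>;
conditioning on \<open>x\<close> and \<open>y\<close>, the jump term of an edge \<open>(x, y)\<close> integrates to
\<open>\<rho> r\<^sub>x\<^sub>y (G y - G x)\<close>, the configurations \<open>10\<close> and \<open>01\<close> on \<open>(x, y)\<close> having the
same weight \<open>\<rho>(1 - \<rho>)\<close>. Summed over the edges, the flow rule lets the inflow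
from the parent into each vertex \<open>y \<noteq> o\<close> cancel its outflow \<open>r\<^sub>y\<close>, leaving \<open>-\<rho> q G o = -\<lambda> G o\<close>.\<close>

definition depends_only_on :: "'v set \<Rightarrow> (('v \<Rightarrow> bool) \<Rightarrow> real) \<Rightarrow> bool" where
  "depends_only_on S g \<longleftrightarrow> (\<forall>\<eta> \<zeta>. (\<forall>x\<in>S. \<eta> x = \<zeta> x) \<longrightarrow> g \<eta> = g \<zeta>)"

definition clear_outside :: "'v set \<Rightarrow> ('v \<Rightarrow> bool) \<Rightarrow> ('v \<Rightarrow> bool)" where
  "clear_outside S \<eta> = (\<lambda>x. x \<in> S \<and> \<eta> x)"

lemma cylinder_fun_iff: "cylinder_fun f \<longleftrightarrow> (\<exists>S. finite S \<and> depends_only_on S f)"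
  by (simp add: cylinder_fun_def depends_only_on_def)

lemma depends_only_on_fun_upd:
  "depends_only_on S g \<Longrightarrow> depends_only_on S (\<lambda>\<eta>. g (\<eta>(v := b)))"
  unfolding depends_only_on_def by simp

lemma depends_only_on_clear_outside:
  "depends_only_on S g \<Longrightarrow> g (clear_outside S \<eta>) = g \<eta>"
  unfolding depends_only_on_def clear_outside_def by simp

lemma finite_range_clear_outside:
  assumes "finite S"
  shows "finite (range (clear_outside S))"
proof (rule finite_subset)
  show "range (clear_outside S) \<subseteq> (\<lambda>T x. x \<in> T) ` Pow S"
    by (auto simp: clear_outside_def intro!: image_eqI[where x="{x\<in>S. _ x}"])
qed (use assms in simp)

lemma depends_only_on_bounded:
  assumes "finite S" "depends_only_on S g"
  shows "\<exists>B. \<forall>\<eta>. \<bar>g \<eta>\<bar> \<le> B"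
proof (intro exI allI)
  fix \<eta>
  have "\<bar>g (clear_outside S \<eta>)\<bar> \<le> Max ((\<lambda>a. \<bar>g a\<bar>) ` range (clear_outside S))"
    using finite_range_clear_outside[OF assms(1)] by (intro Max_ge) auto
  then show "\<bar>g \<eta>\<bar> \<le> Max ((\<lambda>a. \<bar>g a\<bar>) ` range (clear_outside S))"
    by (simp add: depends_only_on_clear_outside[OF assms(2)])
qed

lemma space_bernoulli_product [simp]: "space (bernoulli_product \<rho>) = UNIV"
  by (simp add: bernoulli_product_def space_PiM)

lemma prob_space_bernoulli_product: "prob_space (bernoulli_product \<rho>)"
  unfolding bernoulli_product_def by (intro prob_space_PiM) (simp add: prob_space_measure_pmf)

lemma measurable_clear_outside:
  assumes "finite S"
  shows "clear_outside S \<in> measurable (bernoulli_product \<rho>) (count_space (range (clear_outside S)))"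
proof (subst measurable_count_space_eq2[OF finite_range_clear_outside[OF assms]], intro conjI ballI)
  fix a assume "a \<in> range (clear_outside S)"
  then have "clear_outside S -` {a} \<inter> space (bernoulli_product \<rho>) =
      {\<eta> \<in> space (bernoulli_product \<rho>). \<forall>x\<in>S. \<eta> x = a x}"
    by (auto simp: clear_outside_def fun_eq_iff)
  also have "\<dots> \<in> sets (bernoulli_product \<rho>)"
    unfolding bernoulli_product_def using assms by measurable
  finally show "clear_outside S -` {a} \<inter> space (bernoulli_product \<rho>) \<in> sets (bernoulli_product \<rho>)" .
qed auto

lemma depends_only_on_measurable:
  assumes "finite S" "depends_only_on S g"
  shows "g \<in> borel_measurable (bernoulli_product \<rho>)"
proof -
  have "g \<circ> clear_outside S \<in> borel_measurable (bernoulli_product \<rho>)"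
    by (rule measurable_comp[OF measurable_clear_outside[OF assms(1)]]) simp
  then show ?thesis
    by (simp add: comp_def depends_only_on_clear_outside[OF assms(2)])
qed

lemma depends_only_on_integrable:
  assumes "finite S" "depends_only_on S g"
  shows "integrable (bernoulli_product \<rho>) g"
proof -
  interpret prob_space "bernoulli_product \<rho>" by (rule prob_space_bernoulli_product)
  obtain B where "\<And>\<eta>. \<bar>g \<eta>\<bar> \<le> B" using depends_only_on_bounded[OF assms] by blast
  then show ?thesis
    using depends_only_on_measurable[OF assms] by (intro integrable_const_bound[where B=B]) auto
qed

lemma integral_bernoulli_product_split:
  assumes "finite S" "depends_only_on S g" "0 \<le> \<rho>" "\<rho> \<le> 1"
  shows "integral\<^sup>L (bernoulli_product \<rho>) g =
    \<rho> * integral\<^sup>L (bernoulli_product \<rho>) (\<lambda>\<eta>. g (\<eta>(v := True))) +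
    (1 - \<rho>) * integral\<^sup>L (bernoulli_product \<rho>) (\<lambda>\<eta>. g (\<eta>(v := False)))"
proof -
  let ?\<nu> = "bernoulli_product \<rho>" and ?B = "measure_pmf (bernoulli_pmf \<rho>)"
  interpret pair_prob_space ?B ?\<nu>
    by (intro pair_prob_space.intro pair_sigma_finite.intro prob_space_bernoulli_product
        prob_space_measure_pmf prob_space_imp_sigma_finite)
  let ?upd = "\<lambda>(b, \<eta>). \<eta>(v := b)"
  \<comment> \<open>resampling coordinate \<open>v\<close> independently leaves the product measure unchanged\<close>
  have distr_upd: "distr (?B \<Otimes>\<^sub>M ?\<nu>) ?\<nu> ?upd = ?\<nu>"
    using distr_pair_PiM_eq_PiM[of UNIV "\<lambda>_. ?B" v, OF prob_space_measure_pmf prob_space_measure_pmf]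
    unfolding bernoulli_product_def insert_UNIV .
  have upd_measurable: "?upd \<in> measurable (?B \<Otimes>\<^sub>M ?\<nu>) ?\<nu>"
  proof -
    have "(\<lambda>p. (snd p)(v := fst p)) \<in> measurable (?B \<Otimes>\<^sub>M ?\<nu>) ?\<nu>"
      unfolding bernoulli_product_def
      by (rule measurable_fun_upd[where J=UNIV]) (auto simp: bernoulli_product_def)
    then show ?thesis by (simp add: case_prod_beta')
  qed
  have g_measurable: "g \<in> borel_measurable ?\<nu>"
    by (rule depends_only_on_measurable[OF assms(1,2)])
  obtain B where B: "\<And>\<eta>. \<bar>g \<eta>\<bar> \<le> B" using depends_only_on_bounded[OF assms(1,2)] by blast
  have "(\<lambda>p. g (?upd p)) \<in> borel_measurable (?B \<Otimes>\<^sub>M ?\<nu>)"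
    using measurable_comp[OF upd_measurable g_measurable] by (simp add: comp_def)
  then have integrable_pair: "integrable (?B \<Otimes>\<^sub>M ?\<nu>) (\<lambda>(b, \<eta>). g (\<eta>(v := b)))"
    by (intro integrable_const_bound[where B=B]) (auto simp: B case_prod_beta')
  have integrable_upd: "integrable ?\<nu> (\<lambda>\<eta>. g (\<eta>(v := b)))" for b
    by (rule depends_only_on_integrable[OF assms(1) depends_only_on_fun_upd[OF assms(2)]])
  have "integral\<^sup>L ?\<nu> g = integral\<^sup>L (?B \<Otimes>\<^sub>M ?\<nu>) (\<lambda>p. g (?upd p))"
    by (subst distr_upd[symmetric], rule integral_distr[OF upd_measurable g_measurable])
  also have "\<dots> = (\<integral>\<eta>. (\<integral>b. g (\<eta>(v := b)) \<partial>?B) \<partial>?\<nu>)"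
    using integral_snd[OF integrable_pair] by (simp add: case_prod_beta')
  also have "\<dots> = (\<integral>\<eta>. \<rho> * g (\<eta>(v := True)) + (1 - \<rho>) * g (\<eta>(v := False)) \<partial>?\<nu>)"
    by (intro Bochner_Integration.integral_cong refl) (simp add: assms(3,4) mult.commute)
  also have "\<dots> = \<rho> * integral\<^sup>L ?\<nu> (\<lambda>\<eta>. g (\<eta>(v := True))) +
      (1 - \<rho>) * integral\<^sup>L ?\<nu> (\<lambda>\<eta>. g (\<eta>(v := False)))"
    using integrable_upd by simp
  finally show ?thesis .
qed

definition parent :: "('v \<times> 'v) set \<Rightarrow> 'v \<Rightarrow> 'v" where
  "parent E y = (THE x. (x, y) \<in> E)"

lemma
  assumes "locally_finite_rooted_tree E rt"
  shows root_no_parent: "(x, rt) \<notin> E"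
    and parent_edge: "y \<noteq> rt \<Longrightarrow> (parent E y, y) \<in> E"
    and parent_eqI: "(x, y) \<in> E \<Longrightarrow> parent E y = x"
    and finite_children: "finite {y. (x, y) \<in> E}"
proof -
  have unique: "y \<noteq> rt \<Longrightarrow> \<exists>!x. (x, y) \<in> E" for y
    using assms by (auto simp: locally_finite_rooted_tree_def)
  show no_root: "(x, rt) \<notin> E" for x
    using assms by (auto simp: locally_finite_rooted_tree_def)
  show edge: "(parent E y, y) \<in> E" if "y \<noteq> rt" for y
    unfolding parent_def using unique[OF that] by (rule theI')
  show "parent E y = x" if "(x, y) \<in> E"
    using that edge unique no_root by metis
  show "finite {y. (x, y) \<in> E}"
    using assms by (auto simp: locally_finite_rooted_tree_def)
qed

lemma edges_into_eq:
  assumes "locally_finite_rooted_tree E rt"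
  shows "{p\<in>E. snd p \<in> S} = (\<lambda>y. (parent E y, y)) ` (S - {rt})"
  using root_no_parent[OF assms] parent_edge[OF assms] parent_eqI[OF assms] by force

lemma edges_out_of_eq: "{p\<in>E. fst p \<in> S} = Sigma S (\<lambda>x. {y. (x, y) \<in> E})"
  by auto

definition incident_edges :: "('v \<times> 'v) set \<Rightarrow> 'v set \<Rightarrow> ('v \<times> 'v) set" where
  "incident_edges E S = {p\<in>E. fst p \<in> S \<or> snd p \<in> S}"

lemma finite_incident_edges:
  assumes "locally_finite_rooted_tree E rt" "finite S"
  shows "finite (incident_edges E S)"
proof -
  have "incident_edges E S = {p\<in>E. fst p \<in> S} \<union> {p\<in>E. snd p \<in> S}"
    by (auto simp: incident_edges_def)
  then show ?thesis
    using assms finite_children[OF assms(1)]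
    by (simp add: edges_into_eq[OF assms(1)] edges_out_of_eq)
qed

lemma flow_rule_out_rate_parent:
  assumes "locally_finite_rooted_tree E rt" "flow_rule E rt r q" "y \<noteq> rt"
  shows "out_rate E r y = r (parent E y) y"
  using assms(2) parent_edge[OF assms(1,3)] by (auto simp: flow_rule_def)

lemma sum_edges_out_of:
  assumes "locally_finite_rooted_tree E rt" "finite S"
  shows "(\<Sum>(x, y)\<in>{p\<in>E. fst p \<in> S}. r x y * P x) = (\<Sum>x\<in>S. out_rate E r x * P x)"
proof -
  have "(\<Sum>(x, y)\<in>{p\<in>E. fst p \<in> S}. r x y * P x) = (\<Sum>x\<in>S. \<Sum>y\<in>{y. (x, y) \<in> E}. r x y * P x)"
    unfolding edges_out_of_eq using assms finite_children[OF assms(1)] by (subst sum.Sigma) auto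
  then show ?thesis by (simp add: out_rate_def sum_distrib_right)
qed

lemma sum_edges_into:
  assumes "locally_finite_rooted_tree E rt" "flow_rule E rt r q"
  shows "(\<Sum>(x, y)\<in>{p\<in>E. snd p \<in> S}. r x y * P y) = (\<Sum>y\<in>S - {rt}. out_rate E r y * P y)"
  unfolding edges_into_eq[OF assms(1)]
  by (subst sum.reindex) (auto simp: inj_on_def flow_rule_out_rate_parent[OF assms] intro!: sum.cong)

text \<open>A discrete divergence theorem: by the flow rule every vertex other than
the root passes on exactly what it receives, so only the source term survives.\<close>
lemma flow_rule_sum_incident_edges:
  assumes tree: "locally_finite_rooted_tree E rt" and flow: "flow_rule E rt r q"
    and "finite S" and vanish: "\<And>v. v \<notin> S \<Longrightarrow> P v = 0"
  shows "(\<Sum>(x, y)\<in>incident_edges E S. r x y * (P y - P x)) = - q * P rt"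
proof -
  have finite_D: "finite (incident_edges E S)"
    by (rule finite_incident_edges[OF tree \<open>finite S\<close>])
  have "(\<Sum>(x, y)\<in>incident_edges E S. r x y * P y) = (\<Sum>(x, y)\<in>{p\<in>E. snd p \<in> S}. r x y * P y)"
    using vanish by (intro sum.mono_neutral_right[OF finite_D]) (fastforce simp: incident_edges_def)+
  moreover have "(\<Sum>(x, y)\<in>incident_edges E S. r x y * P x) = (\<Sum>(x, y)\<in>{p\<in>E. fst p \<in> S}. r x y * P x)"
    using vanish by (intro sum.mono_neutral_right[OF finite_D]) (fastforce simp: incident_edges_def)+
  ultimately have "(\<Sum>(x, y)\<in>incident_edges E S. r x y * (P y - P x)) =
      (\<Sum>y\<in>S - {rt}. out_rate E r y * P y) - (\<Sum>x\<in>S. out_rate E r x * P x)"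
    by (simp add: right_diff_distrib sum_subtractf case_prod_unfold
        sum_edges_into[OF tree flow, unfolded case_prod_unfold]
        sum_edges_out_of[OF tree \<open>finite S\<close>, unfolded case_prod_unfold])
  also have "\<dots> = - out_rate E r rt * P rt"
    using \<open>finite S\<close> vanish by (cases "rt \<in> S") (simp_all add: sum.remove[of S rt])
  finally show ?thesis
    using flow by (simp add: flow_rule_def)
qed

definition reservoir_term :: "real \<Rightarrow> 'v \<Rightarrow> (('v \<Rightarrow> bool) \<Rightarrow> real) \<Rightarrow> ('v \<Rightarrow> bool) \<Rightarrow> real" where
  "reservoir_term lam rt f \<eta> = lam * (1 - of_bool (\<eta> rt)) * (f (flip_conf \<eta> rt) - f \<eta>)"

definition jump_term :: "real \<Rightarrow> 'v \<Rightarrow> 'v \<Rightarrow> (('v \<Rightarrow> bool) \<Rightarrow> real) \<Rightarrow> ('v \<Rightarrow> bool) \<Rightarrow> real" where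
  "jump_term c x y f \<eta> = c * of_bool (\<eta> x) * (1 - of_bool (\<eta> y)) * (f (swap_conf \<eta> x y) - f \<eta>)"

lemma depends_only_on_reservoir_term:
  assumes "depends_only_on S f"
  shows "depends_only_on (insert rt S) (reservoir_term lam rt f)"
proof (unfold depends_only_on_def, intro allI impI)
  fix \<eta> \<zeta> :: "_ \<Rightarrow> bool"
  assume agree: "\<forall>v\<in>insert rt S. \<eta> v = \<zeta> v"
  then have "f (flip_conf \<eta> rt) = f (flip_conf \<zeta> rt)" "f \<eta> = f \<zeta>"
    using assms unfolding depends_only_on_def flip_conf_def by simp_all
  then show "reservoir_term lam rt f \<eta> = reservoir_term lam rt f \<zeta>"
    using agree by (simp add: reservoir_term_def)
qed

lemma depends_only_on_jump_term:
  assumes "depends_only_on S f"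
  shows "depends_only_on (insert x (insert y S)) (jump_term c x y f)"
proof (unfold depends_only_on_def, intro allI impI)
  fix \<eta> \<zeta> :: "_ \<Rightarrow> bool"
  assume agree: "\<forall>v\<in>insert x (insert y S). \<eta> v = \<zeta> v"
  then have "f (swap_conf \<eta> x y) = f (swap_conf \<zeta> x y)" "f \<eta> = f \<zeta>"
    using assms unfolding depends_only_on_def swap_conf_def by simp_all
  then show "jump_term c x y f \<eta> = jump_term c x y f \<zeta>"
    using agree by (simp add: jump_term_def)
qed

lemma tasep_gen_eq_finite_sum:
  assumes "locally_finite_rooted_tree E rt" "finite S" "depends_only_on S f"
  shows "tasep_gen E rt r lam f \<eta> =
    reservoir_term lam rt f \<eta> + (\<Sum>(x, y)\<in>incident_edges E S. jump_term (r x y) x y f \<eta>)"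
proof -
  have "jump_term (r x y) x y f \<eta> = 0" if "x \<notin> S" "y \<notin> S" for x y
  proof -
    have "\<forall>v\<in>S. swap_conf \<eta> x y v = \<eta> v" using that by (auto simp: swap_conf_def)
    then show ?thesis using assms(3) by (simp add: jump_term_def depends_only_on_def)
  qed
  then have "(\<Sum>\<^sub>\<infinity>(x, y)\<in>E. jump_term (r x y) x y f \<eta>) =
      (\<Sum>\<^sub>\<infinity>(x, y)\<in>incident_edges E S. jump_term (r x y) x y f \<eta>)"
    by (intro infsum_cong_neutral) (auto simp: incident_edges_def)
  then show ?thesis
    using finite_incident_edges[OF assms(1,2)]
    by (simp add: tasep_gen_def reservoir_term_def jump_term_def)
qed

definition fill_gain :: "real \<Rightarrow> (('v \<Rightarrow> bool) \<Rightarrow> real) \<Rightarrow> 'v \<Rightarrow> real" where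
  "fill_gain \<rho> f v =
     integral\<^sup>L (bernoulli_product \<rho>) (\<lambda>\<eta>. f (\<eta>(v := True))) - integral\<^sup>L (bernoulli_product \<rho>) f"

lemma fill_gain_outside:
  assumes "depends_only_on S f" "v \<notin> S"
  shows "fill_gain \<rho> f v = 0"
proof -
  have "(\<lambda>\<eta>. f (\<eta>(v := True))) = f"
    using assms by (auto simp: depends_only_on_def fun_eq_iff)
  then show ?thesis by (simp add: fill_gain_def)
qed

lemma integral_reservoir_term:
  assumes S: "finite S" and f: "depends_only_on S f" and \<rho>: "0 \<le> \<rho>" "\<rho> \<le> 1"
  shows "integral\<^sup>L (bernoulli_product \<rho>) (reservoir_term lam rt f) = lam * fill_gain \<rho> f rt"
proof -
  let ?\<nu> = "bernoulli_product \<rho>"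
  define F where "F b = integral\<^sup>L ?\<nu> (\<lambda>\<eta>. f (\<eta>(rt := b)))" for b
  have integrable: "integrable ?\<nu> (\<lambda>\<eta>. f (\<eta>(rt := b)))" for b
    by (rule depends_only_on_integrable[OF S depends_only_on_fun_upd[OF f]])
  have "integral\<^sup>L ?\<nu> (reservoir_term lam rt f) =
      \<rho> * integral\<^sup>L ?\<nu> (\<lambda>\<eta>. reservoir_term lam rt f (\<eta>(rt := True))) +
      (1 - \<rho>) * integral\<^sup>L ?\<nu> (\<lambda>\<eta>. reservoir_term lam rt f (\<eta>(rt := False)))"
    using S by (intro integral_bernoulli_product_split[OF _ depends_only_on_reservoir_term[OF f] \<rho>]) simp
  also have "\<dots> = (1 - \<rho>) * lam * (F True - F False)"
    using integrable by (simp add: reservoir_term_def flip_conf_def F_def)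
  also have "fill_gain \<rho> f rt = (1 - \<rho>) * (F True - F False)"
    using integral_bernoulli_product_split[OF S f \<rho>, of rt]
    by (simp add: fill_gain_def F_def algebra_simps)
  ultimately show ?thesis by simp
qed

lemma integral_jump_term:
  assumes S: "finite S" and f: "depends_only_on S f" and \<rho>: "0 \<le> \<rho>" "\<rho> \<le> 1"
  shows "integral\<^sup>L (bernoulli_product \<rho>) (jump_term c x y f) =
    \<rho> * c * (fill_gain \<rho> f y - fill_gain \<rho> f x)"
proof (cases "x = y")
  case True
  then have "jump_term c x y f = (\<lambda>_. 0)"
    by (simp add: fun_eq_iff jump_term_def swap_conf_def)
  then show ?thesis using True by simp
next
  case False
  let ?\<nu> = "bernoulli_product \<rho>" and ?g = "jump_term c x y f"
  define F where "F a b = integral\<^sup>L ?\<nu> (\<lambda>\<eta>. f (\<eta>(x := a, y := b)))" for a b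
  have S': "finite (insert x (insert y S))" using S by simp
  have g: "depends_only_on (insert x (insert y S)) ?g"
    by (rule depends_only_on_jump_term[OF f])
  have integrable: "integrable ?\<nu> (\<lambda>\<eta>. f (\<eta>(x := a, y := b)))" for a b
    by (rule depends_only_on_integrable[OF S depends_only_on_fun_upd[OF depends_only_on_fun_upd[OF f]]])
  have x_empty: "(\<lambda>\<eta>. ?g (\<eta>(x := False))) = (\<lambda>_. 0)"
    by (simp add: fun_eq_iff jump_term_def)
  have y_full: "(\<lambda>\<eta>. ?g (\<eta>(y := True, x := True))) = (\<lambda>_. 0)"
    by (simp add: fun_eq_iff jump_term_def)
  have x_to_y: "(\<lambda>\<eta>. ?g (\<eta>(y := False, x := True))) =
      (\<lambda>\<eta>. c * (f (\<eta>(x := False, y := True)) - f (\<eta>(x := True, y := False))))"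
    using False by (auto simp: jump_term_def swap_conf_def fun_upd_twist fun_eq_iff)
  have "integral\<^sup>L ?\<nu> ?g = \<rho> * integral\<^sup>L ?\<nu> (\<lambda>\<eta>. ?g (\<eta>(x := True)))"
    using integral_bernoulli_product_split[OF S' g \<rho>, of x] by (simp add: x_empty)
  also have "integral\<^sup>L ?\<nu> (\<lambda>\<eta>. ?g (\<eta>(x := True))) = (1 - \<rho>) * c * (F False True - F True False)"
    using integral_bernoulli_product_split[OF S' depends_only_on_fun_upd[OF g, of x True] \<rho>, of y] integrable
    by (simp add: y_full x_to_y F_def)
  finally have integral_g: "integral\<^sup>L ?\<nu> ?g = \<rho> * ((1 - \<rho>) * c * (F False True - F True False))" .
  have "integral\<^sup>L ?\<nu> (\<lambda>\<eta>. f (\<eta>(y := True))) = \<rho> * F True True + (1 - \<rho>) * F False True"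
    using integral_bernoulli_product_split[OF S depends_only_on_fun_upd[OF f] \<rho>, of y True x] False
    by (simp add: F_def fun_upd_twist)
  moreover have "integral\<^sup>L ?\<nu> (\<lambda>\<eta>. f (\<eta>(x := True))) = \<rho> * F True True + (1 - \<rho>) * F True False"
    using integral_bernoulli_product_split[OF S depends_only_on_fun_upd[OF f] \<rho>, of x True y] False
    by (simp add: F_def fun_upd_twist)
  ultimately have "fill_gain \<rho> f y - fill_gain \<rho> f x = (1 - \<rho>) * (F False True - F True False)"
    by (simp add: fill_gain_def algebra_simps)
  then show ?thesis
    by (simp add: integral_g mult_ac)
qed

theorem mainTheorem4:
  fixes E :: "('v \<times> 'v) set" and rt :: 'v
    and r :: "'v \<Rightarrow> 'v \<Rightarrow> real" and q \<rho> lam :: real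
    and f :: "('v \<Rightarrow> bool) \<Rightarrow> real"
  assumes tree: "locally_finite_rooted_tree E rt"
    and rates_pos: "\<forall>(x, y)\<in>E. r x y > 0"
    and rates_bdd: "\<exists>C. \<forall>(x, y)\<in>E. r x y \<le> C"
    and flow: "flow_rule E rt r q"
    and q_pos: "q > 0"
    and rho: "0 < \<rho>" "\<rho> < 1"
    and lam: "lam = \<rho> * q"
    and cyl: "cylinder_fun f"
  shows "integral\<^sup>L (bernoulli_product \<rho>) (tasep_gen E rt r lam f) = 0"
proof -
  let ?\<nu> = "bernoulli_product \<rho>" and ?G = "fill_gain \<rho> f"
  obtain S where S: "finite S" and f: "depends_only_on S f"
    using cyl by (auto simp: cylinder_fun_iff)
  have \<rho>: "0 \<le> \<rho>" "\<rho> \<le> 1" using rho by simp_all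
  have "integral\<^sup>L ?\<nu> (tasep_gen E rt r lam f) = integral\<^sup>L ?\<nu> (\<lambda>\<eta>. reservoir_term lam rt f \<eta> +
      (\<Sum>(x, y)\<in>incident_edges E S. jump_term (r x y) x y f \<eta>))"
    by (rule arg_cong[where f = "integral\<^sup>L ?\<nu>"])
      (simp add: fun_eq_iff tasep_gen_eq_finite_sum[OF tree S f])
  also have "\<dots> = integral\<^sup>L ?\<nu> (reservoir_term lam rt f) +
      (\<Sum>(x, y)\<in>incident_edges E S. integral\<^sup>L ?\<nu> (jump_term (r x y) x y f))"
    using S depends_only_on_integrable[OF _ depends_only_on_reservoir_term[OF f]]
      depends_only_on_integrable[OF _ depends_only_on_jump_term[OF f]]
    by (simp add: case_prod_unfold)
  also have "\<dots> = lam * ?G rt + \<rho> * (\<Sum>(x, y)\<in>incident_edges E S. r x y * (?G y - ?G x))"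
    by (simp add: integral_reservoir_term[OF S f \<rho>] integral_jump_term[OF S f \<rho>]
        sum_distrib_left case_prod_unfold mult.assoc)
  also have "\<dots> = 0"
    using flow_rule_sum_incident_edges[OF tree flow S fill_gain_outside[OF f]] lam by simp
  finally show ?thesis .
qed

end
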